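(* Let $u\in C(\mathbb{R}^n)$ and define $\tilde u(t,x)=u(x)$ for all $(t,x)\in\mathbb{R}\times\mathbb{R}^n$. Then $\tilde u$ is a viscosity super-solution (resp. sub-solution) of the parabolic PDE $$\frac{\partial u}{\partial t}+\mathcal{L}u(t,x)+g(u(t,x),u_x(t,x)\sigma(x))=0$$ if and only if $u$ is a viscosity super-solution (resp. sub-solution) of the elliptic PDE $$\mathcal{L}u(x)+g(u(x),u_x(x)\sigma(x))=0.$$
   Context: Here $g:\mathbb{R}\times\mathbb{R}^n\to\mathbb{R}$, $b:\mathbb{R}^n\to\mathbb{R}^n$, $\sigma:\mathbb{R}^n\to\mathbb{R}^{n\times n}$, $u_x$ is the gradient viewed as a row vector, and $\mathcal{L}u=\sum_i b_i\frac{\partial u}{\partial x_i}+\frac12\sum_{i,j}(\sigma\sigma^{T})_{ij}\frac{\partial^2 u}{\partial x_i\partial x_j}$. A function $v\in C(\mathbb{R}\times\mathbb{R}^n)$ is a viscosity super-solution (resp. sub-solution) of the parabolic PDE if for every $(t,x)$ and every $\varphi\in C^{1,2}(\mathbb{R}\times\mathbb{R}^n)$ with $\varphi(t,x)=v(t,x)$ and $(t,x)$ a maximum (resp. minimum) point of $\varphi-v$, one has $\frac{\partial\varphi}{\partial t}(t,x)+\mathcal{L}\varphi(t,x)+g(\varphi(t,x),\varphi_x(t,x)\sigma(x))\le 0$ (resp. $\ge 0$). Analogously, $u\in C(\mathbb{R}^n)$ is a viscosity super-solution (resp. sub-solution) of the elliptic PDE if for every $x_0$ and every $\varphi\in C^2(\mathbb{R}^n)$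 with $\varphi(x_0)=u(x_0)$ and $x_0$ a maximum (resp. minimum) point of $\varphi-u$, one has $\mathcal{L}\varphi(x_0)+g(\varphi(x_0),\varphi_x(x_0)\sigma(x_0))\le 0$ (resp. $\ge 0$). A viscosity solution is both a super- and sub-solution. *)

theory Defs
  imports "HOL-Analysis.Analysis"
begin

definition partial_x :: "(real^'n \<Rightarrow> real) \<Rightarrow> 'n \<Rightarrow> real^'n \<Rightarrow> real" where
  "partial_x f i x = deriv (\<lambda>s. f (x + s *\<^sub>R axis i 1)) 0"

definition has_partial_x :: "(real^'n \<Rightarrow> real) \<Rightarrow> 'n \<Rightarrow> real^'n \<Rightarrow> bool" where
  "has_partial_x f i x \<longleftrightarrow> (\<exists>D. ((\<lambda>s. f (x + s *\<^sub>R axis i 1)) has_real_derivative D) (at 0))"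

definition C2 :: "(real^'n \<Rightarrow> real) \<Rightarrow> bool" where
  "C2 f \<longleftrightarrow> continuous_on UNIV f
     \<and> (\<forall>i x. has_partial_x f i x) \<and> (\<forall>i. continuous_on UNIV (partial_x f i))
     \<and> (\<forall>i j x. has_partial_x (partial_x f j) i x)
     \<and> (\<forall>i j. continuous_on UNIV (partial_x (partial_x f j) i))"

definition partial_t :: "(real \<Rightarrow> real^'n \<Rightarrow> real) \<Rightarrow> real \<Rightarrow> real^'n \<Rightarrow> real" where
  "partial_t f t x = deriv (\<lambda>s. f s x) t"

definition C12 :: "(real \<Rightarrow> real^'n \<Rightarrow> real) \<Rightarrow> bool" where
  "C12 f \<longleftrightarrow> continuous_on UNIV (\<lambda>(t,x). f t x)
     \<and> (\<forall>t x. \<exists>D. ((\<lambda>s. f s x) has_real_derivative D) (at t))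
     \<and> continuous_on UNIV (\<lambda>(t,x). partial_t f t x)
     \<and> (\<forall>i t x. has_partial_x (f t) i x)
     \<and> (\<forall>i. continuous_on UNIV (\<lambda>(t,x). partial_x (f t) i x))
     \<and> (\<forall>i j t x. has_partial_x (partial_x (f t) j) i x)
     \<and> (\<forall>i j. continuous_on UNIV (\<lambda>(t,x). partial_x (partial_x (f t) j) i x))"

definition grad :: "(real^'n \<Rightarrow> real) \<Rightarrow> real^'n \<Rightarrow> real^'n" where
  "grad f x = (\<chi> i. partial_x f i x)"

definition gen_L :: "(real^'n \<Rightarrow> real^'n) \<Rightarrow> (real^'n \<Rightarrow> real^'n^'n) \<Rightarrow> (real^'n \<Rightarrow> real) \<Rightarrow> real^'n \<Rightarrow> real" where
  "gen_L b \<sigma> f x = (\<Sum>i\<in>UNIV. b x $ i * partial_x f i x)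
     + (1/2) * (\<Sum>i\<in>UNIV. \<Sum>j\<in>UNIV. ((\<sigma> x ** transpose (\<sigma> x)) $ i $ j) * partial_x (partial_x f j) i x)"

text \<open>Viscosity super/sub-solutions of the parabolic PDE
  dv/dt + L v + g(v, v_x \<sigma>) = 0 on R x R^n (maximum/minimum meant globally, as in the definition).\<close>
definition visc_super_par where
  "visc_super_par b \<sigma> g v \<longleftrightarrow> continuous_on UNIV (\<lambda>(t,x). v t x) \<and>
    (\<forall>t x \<phi>. C12 \<phi> \<and> \<phi> t x = v t x \<and> (\<forall>s y. \<phi> s y - v s y \<le> \<phi> t x - v t x) \<longrightarrow>
       partial_t \<phi> t x + gen_L b \<sigma> (\<phi> t) x + g (\<phi> t x) (grad (\<phi> t) x v* \<sigma> x) \<le> 0)"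

definition visc_sub_par where
  "visc_sub_par b \<sigma> g v \<longleftrightarrow> continuous_on UNIV (\<lambda>(t,x). v t x) \<and>
    (\<forall>t x \<phi>. C12 \<phi> \<and> \<phi> t x = v t x \<and> (\<forall>s y. \<phi> s y - v s y \<ge> \<phi> t x - v t x) \<longrightarrow>
       partial_t \<phi> t x + gen_L b \<sigma> (\<phi> t) x + g (\<phi> t x) (grad (\<phi> t) x v* \<sigma> x) \<ge> 0)"

definition visc_super_ell where
  "visc_super_ell b \<sigma> g u \<longleftrightarrow> continuous_on UNIV u \<and>
    (\<forall>x0 \<phi>. C2 \<phi> \<and> \<phi> x0 = u x0 \<and> (\<forall>y. \<phi> y - u y \<le> \<phi> x0 - u x0) \<longrightarrow>
       gen_L b \<sigma> \<phi> x0 + g (\<phi> x0) (grad \<phi> x0 v* \<sigma> x0) \<le> 0)"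

definition visc_sub_ell where
  "visc_sub_ell b \<sigma> g u \<longleftrightarrow> continuous_on UNIV u \<and>
    (\<forall>x0 \<phi>. C2 \<phi> \<and> \<phi> x0 = u x0 \<and> (\<forall>y. \<phi> y - u y \<ge> \<phi> x0 - u x0) \<longrightarrow>
       gen_L b \<sigma> \<phi> x0 + g (\<phi> x0) (grad \<phi> x0 v* \<sigma> x0) \<ge> 0)"

end

theory Submission
  imports Defs
begin

text \<open>A test function touching the time-independent function \<open>\<lambda>t x. u x\<close> at \<open>(t, x)\<close> from above
  or below has an extremum in \<open>t\<close> there, so its time derivative vanishes, and its time slice
  at \<open>t\<close> is an elliptic test function for \<open>u\<close> at \<open>x\<close>. Conversely, an elliptic test function,
  extended constantly in time, is a parabolic test function with zero time derivative.\<close>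

lemma continuous_on_slice:
  assumes "continuous_on UNIV (\<lambda>(t, x). F t x)"
  shows "continuous_on UNIV (F t)"
proof -
  have "continuous_on UNIV ((\<lambda>(t, x). F t x) \<circ> Pair t)"
    by (rule continuous_on_compose[OF _ continuous_on_subset[OF assms]])
       (auto intro!: continuous_intros)
  then show ?thesis by (simp add: o_def)
qed

lemma continuous_on_time_independent:
  assumes "continuous_on UNIV f"
  shows "continuous_on UNIV (\<lambda>(t::'a::topological_space, x). f x)"
proof -
  have "continuous_on UNIV (f \<circ> snd)"
    by (rule continuous_on_compose[OF _ continuous_on_subset[OF assms]])
       (auto intro!: continuous_intros)
  then show ?thesis by (simp add: o_def case_prod_beta)
qed

lemma C2_slice_of_C12: "C12 \<phi> \<Longrightarrow> C2 (\<phi> t)"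
  unfolding C12_def C2_def by (auto intro: continuous_on_slice)

lemma C12_time_independent: "C2 \<phi> \<Longrightarrow> C12 (\<lambda>t. \<phi>)"
  unfolding C12_def C2_def partial_t_def
  by (auto intro!: continuous_on_time_independent exI[of _ 0] DERIV_const)

lemma partial_t_time_independent: "partial_t (\<lambda>t. \<phi>) t x = 0"
  unfolding partial_t_def by simp

lemma deriv_zero_at_global_max:
  fixes f :: "real \<Rightarrow> real"
  assumes "(f has_real_derivative D) (at t)" and "\<forall>s. f s \<le> f t"
  shows "deriv f t = 0"
proof -
  have "D = 0" by (rule DERIV_local_max[OF assms(1), of 1]) (use assms(2) in auto)
  with assms(1) show ?thesis by (simp add: DERIV_imp_deriv)
qed

lemma deriv_zero_at_global_min:
  fixes f :: "real \<Rightarrow> real"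
  assumes "(f has_real_derivative D) (at t)" and "\<forall>s. f t \<le> f s"
  shows "deriv f t = 0"
proof -
  have "D = 0" by (rule DERIV_local_min[OF assms(1), of 1]) (use assms(2) in auto)
  with assms(1) show ?thesis by (simp add: DERIV_imp_deriv)
qed

lemma partial_t_zero_at_time_max:
  assumes "C12 \<phi>" and "\<forall>s. \<phi> s x \<le> \<phi> t x"
  shows "partial_t \<phi> t x = 0"
proof -
  obtain D where "((\<lambda>s. \<phi> s x) has_real_derivative D) (at t)"
    using assms(1) unfolding C12_def by blast
  then show ?thesis
    unfolding partial_t_def using assms(2) by (rule deriv_zero_at_global_max)
qed

lemma partial_t_zero_at_time_min:
  assumes "C12 \<phi>" and "\<forall>s. \<phi> t x \<le> \<phi> s x"
  shows "partial_t \<phi> t x = 0"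
proof -
  obtain D where "((\<lambda>s. \<phi> s x) has_real_derivative D) (at t)"
    using assms(1) unfolding C12_def by blast
  then show ?thesis
    unfolding partial_t_def using assms(2) by (rule deriv_zero_at_global_min)
qed

lemma visc_super_par_time_independent_iff:
  assumes "continuous_on UNIV u"
  shows "visc_super_par b \<sigma> g (\<lambda>t x. u x) \<longleftrightarrow> visc_super_ell b \<sigma> g u"
proof
  assume par: "visc_super_par b \<sigma> g (\<lambda>t x. u x)"
  show "visc_super_ell b \<sigma> g u" unfolding visc_super_ell_def
  proof (intro conjI assms allI impI)
    fix x0 \<phi> assume test: "C2 \<phi> \<and> \<phi> x0 = u x0 \<and> (\<forall>y. \<phi> y - u y \<le> \<phi> x0 - u x0)"
    then have "partial_t (\<lambda>t. \<phi>) 0 x0 + gen_L b \<sigma> \<phi> x0 + g (\<phi> x0) (grad \<phi> x0 v* \<sigma> x0) \<le> 0"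
      using par C12_time_independent[of \<phi>] unfolding visc_super_par_def by blast
    then show "gen_L b \<sigma> \<phi> x0 + g (\<phi> x0) (grad \<phi> x0 v* \<sigma> x0) \<le> 0"
      by (simp add: partial_t_time_independent)
  qed
next
  assume ell: "visc_super_ell b \<sigma> g u"
  show "visc_super_par b \<sigma> g (\<lambda>t x. u x)" unfolding visc_super_par_def
  proof (intro conjI continuous_on_time_independent[OF assms] allI impI)
    fix t x \<phi> assume test: "C12 \<phi> \<and> \<phi> t x = u x \<and> (\<forall>s y. \<phi> s y - u y \<le> \<phi> t x - u x)"
    then have "gen_L b \<sigma> (\<phi> t) x + g (\<phi> t x) (grad (\<phi> t) x v* \<sigma> x) \<le> 0"
      using ell C2_slice_of_C12[of \<phi> t] unfolding visc_super_ell_def by blast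
    moreover have "partial_t \<phi> t x = 0"
      using test by (intro partial_t_zero_at_time_max) auto
    ultimately show "partial_t \<phi> t x + gen_L b \<sigma> (\<phi> t) x + g (\<phi> t x) (grad (\<phi> t) x v* \<sigma> x) \<le> 0"
      by simp
  qed
qed

lemma visc_sub_par_time_independent_iff:
  assumes "continuous_on UNIV u"
  shows "visc_sub_par b \<sigma> g (\<lambda>t x. u x) \<longleftrightarrow> visc_sub_ell b \<sigma> g u"
proof
  assume par: "visc_sub_par b \<sigma> g (\<lambda>t x. u x)"
  show "visc_sub_ell b \<sigma> g u" unfolding visc_sub_ell_def
  proof (intro conjI assms allI impI)
    fix x0 \<phi> assume test: "C2 \<phi> \<and> \<phi> x0 = u x0 \<and> (\<forall>y. \<phi> y - u y \<ge> \<phi> x0 - u x0)"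
    then have "partial_t (\<lambda>t. \<phi>) 0 x0 + gen_L b \<sigma> \<phi> x0 + g (\<phi> x0) (grad \<phi> x0 v* \<sigma> x0) \<ge> 0"
      using par C12_time_independent[of \<phi>] unfolding visc_sub_par_def by blast
    then show "gen_L b \<sigma> \<phi> x0 + g (\<phi> x0) (grad \<phi> x0 v* \<sigma> x0) \<ge> 0"
      by (simp add: partial_t_time_independent)
  qed
next
  assume ell: "visc_sub_ell b \<sigma> g u"
  show "visc_sub_par b \<sigma> g (\<lambda>t x. u x)" unfolding visc_sub_par_def
  proof (intro conjI continuous_on_time_independent[OF assms] allI impI)
    fix t x \<phi> assume test: "C12 \<phi> \<and> \<phi> t x = u x \<and> (\<forall>s y. \<phi> s y - u y \<ge> \<phi> t x - u x)"
    then have "gen_L b \<sigma> (\<phi> t) x + g (\<phi> t x) (grad (\<phi> t) x v* \<sigma> x) \<ge> 0"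
      using ell C2_slice_of_C12[of \<phi> t] unfolding visc_sub_ell_def by blast
    moreover have "partial_t \<phi> t x = 0"
      using test by (intro partial_t_zero_at_time_min) auto
    ultimately show "partial_t \<phi> t x + gen_L b \<sigma> (\<phi> t) x + g (\<phi> t x) (grad (\<phi> t) x v* \<sigma> x) \<ge> 0"
      by simp
  qed
qed

theorem lemma2:
  fixes u :: "real^'n \<Rightarrow> real"
    and b :: "real^'n \<Rightarrow> real^'n"
    and \<sigma> :: "real^'n \<Rightarrow> real^'n^'n"
    and g :: "real \<Rightarrow> real^'n \<Rightarrow> real"
  assumes "continuous_on UNIV u"
  shows "(visc_super_par b \<sigma> g (\<lambda>t x. u x) \<longleftrightarrow> visc_super_ell b \<sigma> g u)
       \<and> (visc_sub_par b \<sigma> g (\<lambda>t x. u x) \<longleftrightarrow> visc_sub_ell b \<sigma> g u)"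
  using visc_super_par_time_independent_iff[OF assms] visc_sub_par_time_independent_iff[OF assms]
  by blast

end
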